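(* Let $l,m$ be positive integers, $n=l+m$, $k=\operatorname{lcm}(l,m)$, let $\alpha_1,\dots,\alpha_l,\beta_1,\dots,\beta_m\ge 0$ be given (in this order), not all zero, with $\alpha_1+\dots+\alpha_l=\beta_1+\dots+\beta_m$, put $\boldsymbol\nu=(\alpha_1,\dots,\alpha_l,-\beta_1,\dots,-\beta_m)$, and let $\boldsymbol\rho=(\rho_1,\dots,\rho_k)$ with every $\rho_i>1$. Then there are unique $k$-tuples of real numbers $(u_0,\dots,u_{k-1})$ and $(v_0,\dots,v_{k-1})$ such that, with the points ${\bf a}_r^t,{\bf b}_r^t$ and segments $\mathcal A_r^t,\mathcal B_r^t$ defined from them as in the context, every segment $\mathcal A_r^t$ ($0\le r<k$, $t\in\mathbb Z$) has slope $\alpha_{r+1}$, every segment $\mathcal B_r^t$ ($0\le r<k$, $t\in\mathbb Z$) has slope $-\beta_{r+1}$, and the set $$\mathcal G(\boldsymbol\nu,\boldsymbol\rho)=\{{\bf 0}\}\cup\bigcup_{t\in\mathbb Z}\bigcup_{0\le r<k}\left(\mathcal A_r^t\cup\mathcal B_r^t\right)\subset\mathbb R^2$$ is a regular $\boldsymbol\nu$-graph.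
   Context: Indexing conventions: for an integer $r$, $\alpha_r:=\alpha_i$ where $1\le i\le l$ and $r\equiv i\pmod l$; $\beta_r:=\beta_j$ where $1\le j\le m$ and $r\equiv j\pmod m$; $\rho_r:=\rho_h$ where $1\le h\le k$ and $r\equiv h\pmod k$. Set $\sigma_0=1$, $\sigma_r=\rho_1\cdots\rho_r$ for $1\le r\le k$, $\tau=\sigma_k=\rho_1\cdots\rho_k$, and for arbitrary $r=sk+h$ with $s\in\mathbb Z$, $0\le h<k$, set $\sigma_r=\tau^s\sigma_h$, $u_r=u_h$, $v_r=v_h$. For $r,t\in\mathbb Z$ define points ${\bf a}_r^t=\tau^t\sigma_r(1,u_r)$ and ${\bf b}_r^t=\tau^t\sigma_r(1,v_r)$ in $\mathbb R^2$, and for $0\le r<k$, $t\in\mathbb Z$ the closed line segments $\mathcal A_r^t=[{\bf a}_r^t,{\bf b}_{r+l}^t]$ and $\mathcal B_r^t=[{\bf b}_r^t,{\bf a}_{r+m}^t]$. A $\boldsymbol\nu$-system is an $n$-tuple of functions $P_1,\dots,P_n:[0,\infty)\to\mathbb R$ which are continuous, satisfy $P_1\le P_2\le\dots\le P_n$ and $P_1(0)=\dots=P_n(0)=0$, are piecewise linear with only finitely many linear pieces in any interval with positive endpoints, have slopes among $\alpha_1,\dots,\alpha_l,-\beta_1,\dots,-\beta_m$, and such that on every interval where each $P_i$ is linear, the slopes of $P_1,\dots,P_n$ are the numbers $\alpha_1,\dots,\alpha_l,-\beta_1,\dots,-\beta_m$ in some order. A $\boldsymbol\nu$-graph is the union of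 the graphs of the functions of a $\boldsymbol\nu$-system. A $\boldsymbol\nu$-system (and its graph) is regular if the graph is invariant under the map $\boldsymbol\eta\mapsto\tau'\boldsymbol\eta$ of $\mathbb R^2$ for some $\tau'>1$. *)

theory Defs
  imports "HOL-Analysis.Analysis" "HOL-Library.Multiset"
begin

text \<open>alpha_r := alpha_i with 1 <= i <= l and r = i (mod l); the family is given on 1..l.\<close>
definition cyc :: "nat \<Rightarrow> (nat \<Rightarrow> real) \<Rightarrow> int \<Rightarrow> real" where
  "cyc l f r = f (nat ((r - 1) mod int l) + 1)"

definition tau_of :: "nat \<Rightarrow> (nat \<Rightarrow> real) \<Rightarrow> real" where
  "tau_of k rho = (\<Prod>i\<in>{1..k}. rho i)"

definition sigma_of :: "nat \<Rightarrow> (nat \<Rightarrow> real) \<Rightarrow> int \<Rightarrow> real" where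
  "sigma_of k rho r =
     tau_of k rho powi (r div int k) * (\<Prod>i\<in>{1..nat (r mod int k)}. rho i)"

definition per :: "nat \<Rightarrow> real list \<Rightarrow> int \<Rightarrow> real" where
  "per k u r = u ! nat (r mod int k)"

definition pt :: "nat \<Rightarrow> (nat \<Rightarrow> real) \<Rightarrow> real list \<Rightarrow> int \<Rightarrow> int \<Rightarrow> real \<times> real" where
  "pt k rho w r t = (tau_of k rho powi t * sigma_of k rho r) *\<^sub>R (1, per k w r)"

definition segA :: "nat \<Rightarrow> nat \<Rightarrow> (nat \<Rightarrow> real) \<Rightarrow> real list \<Rightarrow> real list \<Rightarrow> int \<Rightarrow> int \<Rightarrow> (real \<times> real) set" where
  "segA k l rho u v r t = closed_segment (pt k rho u r t) (pt k rho v (r + int l) t)"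

definition segB :: "nat \<Rightarrow> nat \<Rightarrow> (nat \<Rightarrow> real) \<Rightarrow> real list \<Rightarrow> real list \<Rightarrow> int \<Rightarrow> int \<Rightarrow> (real \<times> real) set" where
  "segB k m rho u v r t = closed_segment (pt k rho v r t) (pt k rho u (r + int m) t)"

definition slope :: "real \<times> real \<Rightarrow> real \<times> real \<Rightarrow> real" where
  "slope p q = (snd q - snd p) / (fst q - fst p)"

definition Gset :: "nat \<Rightarrow> nat \<Rightarrow> nat \<Rightarrow> (nat \<Rightarrow> real) \<Rightarrow> real list \<Rightarrow> real list \<Rightarrow> (real \<times> real) set" where
  "Gset k l m rho u v = {0} \<union> (\<Union>t::int. \<Union>r\<in>{0..<int k}. segA k l rho u v r t \<union> segB k m rho u v r t)"

definition affine_with_slope :: "(real \<Rightarrow> real) \<Rightarrow> real set \<Rightarrow> real \<Rightarrow> bool" where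
  "affine_with_slope f S s \<longleftrightarrow> (\<exists>c. \<forall>x\<in>S. f x = s * x + c)"

text \<open>P 1, ..., P n are the functions (only their values on [0,inf) matter);
  nu is the list of the n slopes.\<close>
definition nu_system :: "nat \<Rightarrow> real list \<Rightarrow> (nat \<Rightarrow> real \<Rightarrow> real) \<Rightarrow> bool" where
  "nu_system n nu P \<longleftrightarrow>
     (\<forall>i\<in>{1..n}. continuous_on {0..} (P i)) \<and>
     (\<forall>i\<in>{1..<n}. \<forall>x\<ge>0. P i x \<le> P (Suc i) x) \<and>
     (\<forall>i\<in>{1..n}. P i 0 = 0) \<and>
     (\<forall>a b. 0 < a \<longrightarrow> a < b \<longrightarrow>
        (\<exists>X. finite X \<and> a \<in> X \<and> b \<in> X \<and> X \<subseteq> {a..b} \<and>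
           (\<forall>c\<in>X. \<forall>d\<in>X. c < d \<longrightarrow> {c<..<d} \<inter> X = {} \<longrightarrow>
              (\<forall>i\<in>{1..n}. \<exists>s. affine_with_slope (P i) {c..d} s)))) \<and>
     (\<forall>i\<in>{1..n}. \<forall>c d s. 0 \<le> c \<longrightarrow> c < d \<longrightarrow> affine_with_slope (P i) {c..d} s \<longrightarrow> s \<in> set nu) \<and>
     (\<forall>c d. 0 \<le> c \<longrightarrow> c < d \<longrightarrow> (\<forall>i\<in>{1..n}. \<exists>s. affine_with_slope (P i) {c..d} s) \<longrightarrow>
        (\<exists>s::nat \<Rightarrow> real. (\<forall>i\<in>{1..n}. affine_with_slope (P i) {c..d} (s i)) \<and>
            mset (map s [1..<n+1]) = mset nu))"

definition nu_graph_of :: "nat \<Rightarrow> (nat \<Rightarrow> real \<Rightarrow> real) \<Rightarrow> (real \<times> real) set" where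
  "nu_graph_of n P = (\<Union>i\<in>{1..n}. {(x, P i x) | x. 0 \<le> x})"

definition is_nu_graph :: "nat \<Rightarrow> real list \<Rightarrow> (real \<times> real) set \<Rightarrow> bool" where
  "is_nu_graph n nu G \<longleftrightarrow> (\<exists>P. nu_system n nu P \<and> G = nu_graph_of n P)"

definition is_regular_nu_graph :: "nat \<Rightarrow> real list \<Rightarrow> (real \<times> real) set \<Rightarrow> bool" where
  "is_regular_nu_graph n nu G \<longleftrightarrow>
     is_nu_graph n nu G \<and> (\<exists>\<tau>'>1. (\<lambda>\<eta>. \<tau>' *\<^sub>R \<eta>) ` G = G)"

end

theory Submission
  imports Defs
begin

text \<open>
  Write \<open>s = r + t k\<close> and \<open>H\<^sub>w(s) = \<sigma>\<^sub>s w\<^sub>s\<close> for the heights of the points. The slope conditions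
  become the recurrences \<open>H\<^sub>v(s + l) = H\<^sub>u(s) + \<alpha>\<^sub>s\<^sub>+\<^sub>1 (\<sigma>\<^sub>s\<^sub>+\<^sub>l - \<sigma>\<^sub>s)\<close> and
  \<open>H\<^sub>u(s + m) = H\<^sub>v(s) - \<beta>\<^sub>s\<^sub>+\<^sub>1 (\<sigma>\<^sub>s\<^sub>+\<^sub>m - \<sigma>\<^sub>s)\<close> for all integers \<open>s\<close>. Composing them shifts \<open>s\<close>
  by \<open>n = l + m\<close> and adds a known quantity, while periodicity gives \<open>H(s + k) = \<tau> H(s)\<close>; going
  \<open>k\<close> times around therefore determines \<open>H\<^sub>u\<close> (and then \<open>H\<^sub>v\<close>) explicitly, since \<open>\<tau>\<^sup>n \<noteq> 1\<close>.

  For the solution, the segments chain into \<open>n\<close> continuous piecewise linear threads: on each cell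
  \<open>[\<sigma>\<^sub>s, \<sigma>\<^sub>s\<^sub>+\<^sub>1]\<close> thread \<open>j\<close> runs along the segment selected by the phase \<open>(s - j) mod n\<close>, and
  there the \<open>n\<close> threads use every slope of \<open>\<nu>\<close> exactly once. Sorting the threads pointwise gives
  \<open>P\<^sub>1 \<le> \<dots> \<le> P\<^sub>n\<close> with the same union of graphs; the sorted functions stay continuous and, after
  refining the cells at the finitely many crossing points, piecewise linear with slopes a
  permutation of \<open>\<nu>\<close>. That union is \<open>\<G>(\<nu>, \<rho>)\<close>, which scaling by \<open>\<tau>\<close> maps onto itself.
\<close>

lemma affine_with_slope_subset:
  "affine_with_slope f S s \<Longrightarrow> T \<subseteq> S \<Longrightarrow> affine_with_slope f T s"
  unfolding affine_with_slope_def by blast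

lemma affine_with_slope_continuous_on: "affine_with_slope f S s \<Longrightarrow> continuous_on S f"
proof -
  assume "affine_with_slope f S s"
  then obtain e where "\<forall>x\<in>S. f x = s * x + e" unfolding affine_with_slope_def by blast
  moreover have "continuous_on S (\<lambda>x. s * x + e)" by (intro continuous_intros)
  ultimately show ?thesis using continuous_on_cong by force
qed

lemma affine_with_slope_unique:
  assumes "affine_with_slope f {c..d} s" "affine_with_slope f {c..d} s'" "c < d"
  shows "s = s'"
proof -
  obtain e e' where "\<forall>x\<in>{c..d}. f x = s * x + e" "\<forall>x\<in>{c..d}. f x = s' * x + e'"
    using assms(1,2) unfolding affine_with_slope_def by blast
  then have "s * c + e = s' * c + e'" "s * d + e = s' * d + e'" using assms(3) by auto
  then have "(s - s') * (d - c) = 0" by (simp add: algebra_simps)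
  then show ?thesis using assms(3) by simp
qed

lemma affine_with_slope_agree:
  assumes "affine_with_slope f S s" "affine_with_slope g S s'"
    and "x \<in> S" "y \<in> S" "x \<noteq> y" "f x = g x" "f y = g y"
  shows "\<forall>z\<in>S. f z = g z"
proof -
  obtain e e' where e: "\<forall>x\<in>S. f x = s * x + e" and e': "\<forall>x\<in>S. g x = s' * x + e'"
    using assms(1,2) unfolding affine_with_slope_def by blast
  have xy: "s * x + e = s' * x + e'" "s * y + e = s' * y + e'" using e e' assms(3-7) by auto
  then have "(s - s') * (x - y) = 0" by (simp add: algebra_simps)
  then have "s = s'" using assms(5) by simp
  with xy have "e = e'" by simp
  with \<open>s = s'\<close> e e' show ?thesis by auto
qed

definition partition_points :: "real \<Rightarrow> real \<Rightarrow> real set \<Rightarrow> bool" where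
  "partition_points a b Y \<longleftrightarrow> finite Y \<and> a \<in> Y \<and> b \<in> Y \<and> Y \<subseteq> {a..b}"

definition consecutive :: "real set \<Rightarrow> real \<Rightarrow> real \<Rightarrow> bool" where
  "consecutive Y c d \<longleftrightarrow> c \<in> Y \<and> d \<in> Y \<and> c < d \<and> {c<..<d} \<inter> Y = {}"

lemma partition_points_cover:
  assumes Y: "partition_points a b Y" and "a < b" "x \<in> {a..b}"
  shows "\<exists>c d. consecutive Y c d \<and> x \<in> {c..d}"
proof -
  define L where "L = {z\<in>Y. z \<le> x \<and> z < b}"
  have L: "finite L" "a \<in> L" using Y assms(2,3) unfolding L_def partition_points_def by auto
  define c where "c = Max L"
  have c: "c \<in> Y" "c \<le> x" "c < b" using Max_in[OF L(1)] L(2) unfolding c_def L_def by auto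
  define R where "R = {z\<in>Y. c < z}"
  have R: "finite R" "b \<in> R" using Y c unfolding R_def partition_points_def by auto
  define d where "d = Min R"
  have d: "d \<in> Y" "c < d" using Min_in[OF R(1)] R(2) unfolding d_def R_def by auto
  have "x \<le> d"
  proof (rule ccontr)
    assume "\<not> x \<le> d"
    moreover have "d \<le> b" using d(1) Y unfolding partition_points_def by auto
    ultimately have "d \<in> L" using d(1) assms(3) unfolding L_def by auto
    then show False using Max_ge[OF L(1), of d] d(2) unfolding c_def by simp
  qed
  moreover have "{c<..<d} \<inter> Y = {}"
  proof (rule equals0I)
    fix z assume "z \<in> {c<..<d} \<inter> Y"
    then have "z \<in> R" "z < d" unfolding R_def by auto
    then show False using Min_le[OF R(1), of z] unfolding d_def by simp
  qed
  ultimately show ?thesis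
    using c d unfolding consecutive_def by (intro exI[of _ c] exI[of _ d]) simp
qed

lemma consecutive_coarsen:
  assumes Y: "partition_points a b Y" and "Y \<subseteq> Z" "Z \<subseteq> {a..b}" "consecutive Z c d"
  shows "\<exists>c0 d0. consecutive Y c0 d0 \<and> {c..d} \<subseteq> {c0..d0}"
proof -
  have cd: "c \<in> Z" "d \<in> Z" "c < d" "{c<..<d} \<inter> Z = {}" using assms(4) unfolding consecutive_def by auto
  define x where "x = (c + d) / 2"
  have "a \<le> c" "d \<le> b" using cd(1,2) assms(3) by auto
  then have "a < b" "x \<in> {a..b}" using cd(3) unfolding x_def by auto
  then obtain c0 d0 where c0d0: "consecutive Y c0 d0" "x \<in> {c0..d0}"
    using partition_points_cover[OF Y] by blast
  then have "c0 \<in> Z" "d0 \<in> Z" using assms(2) unfolding consecutive_def by auto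
  moreover have "c < x" "x < d" using cd(3) unfolding x_def by auto
  ultimately have "c0 \<notin> {c<..<d}" "d0 \<notin> {c<..<d}" using cd(4) by auto
  then have "\<not> c < c0" "\<not> d0 < d" using c0d0(2) \<open>c < x\<close> \<open>x < d\<close> by auto
  then have "c0 \<le> c" "d \<le> d0" by simp_all
  then show ?thesis using c0d0(1) by (intro exI[of _ c0] exI[of _ d0]) auto
qed

section \<open>Sorting finitely many piecewise affine functions\<close>

definition slopes_permute :: "nat \<Rightarrow> real list \<Rightarrow> (nat \<Rightarrow> real \<Rightarrow> real) \<Rightarrow> real \<Rightarrow> real \<Rightarrow> bool" where
  "slopes_permute n nu F c d \<longleftrightarrow>
     (\<exists>sl. (\<forall>j<n. affine_with_slope (F j) {c..d} (sl j)) \<and> mset (map sl [0..<n]) = mset nu)"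

definition sorting_cell :: "nat \<Rightarrow> real list \<Rightarrow> (nat \<Rightarrow> real \<Rightarrow> real) \<Rightarrow> real \<Rightarrow> real \<Rightarrow> bool" where
  "sorting_cell n nu F c d \<longleftrightarrow> c < d \<and> slopes_permute n nu F c d \<and>
     (\<forall>p<n. \<forall>q<n. (\<forall>x\<in>{c..d}. F p x = F q x) \<or> (\<forall>x\<in>{c<..<d}. F p x \<noteq> F q x))"

lemma slopes_permute_subset:
  "slopes_permute n nu F c d \<Longrightarrow> {c'..d'} \<subseteq> {c..d} \<Longrightarrow> slopes_permute n nu F c' d'"
  unfolding slopes_permute_def using affine_with_slope_subset by blast

definition crossings :: "(nat \<Rightarrow> real \<Rightarrow> real) \<Rightarrow> nat \<Rightarrow> nat \<Rightarrow> real \<Rightarrow> real \<Rightarrow> real set" where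
  "crossings F p q c d = {x\<in>{c..d}. F p x = F q x \<and> \<not> (\<forall>y\<in>{c..d}. F p y = F q y)}"

lemma finite_crossings:
  assumes "slopes_permute n nu F c d" "p < n" "q < n"
  shows "finite (crossings F p q c d)"
proof -
  obtain sl where sl: "\<forall>j<n. affine_with_slope (F j) {c..d} (sl j)"
    using assms(1) unfolding slopes_permute_def by blast
  have single: "x = y" if "x \<in> crossings F p q c d" "y \<in> crossings F p q c d" for x y
  proof (rule ccontr)
    assume "x \<noteq> y"
    with that have "\<forall>z\<in>{c..d}. F p z = F q z"
      using sl assms(2,3) unfolding crossings_def
      by (intro affine_with_slope_agree[of "F p" "{c..d}" "sl p" "F q" "sl q" x y]) auto
    then show False using that unfolding crossings_def by blast
  qed
  show ?thesis
  proof (cases "crossings F p q c d = {}")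
    case False
    then obtain x where "crossings F p q c d \<subseteq> {x}" using single by blast
    then show ?thesis by (rule finite_subset) simp
  qed simp
qed

text \<open>Adding the finitely many points where two of the lines cross (without coinciding)
  makes every cell a sorting cell.\<close>
lemma exists_sorting_partition:
  assumes Y: "partition_points a b Y" and cells: "\<And>c d. consecutive Y c d \<Longrightarrow> slopes_permute n nu F c d"
  shows "\<exists>Z. partition_points a b Z \<and> (\<forall>c d. consecutive Z c d \<longrightarrow> sorting_cell n nu F c d)"
proof -
  define Cr where
    "Cr = (\<Union>(c,d)\<in>{(c,d). consecutive Y c d}. \<Union>p<n. \<Union>q<n. crossings F p q c d)"
  have "{(c,d). consecutive Y c d} \<subseteq> Y \<times> Y" unfolding consecutive_def by auto
  then have "finite {(c,d). consecutive Y c d}"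
    using Y finite_subset unfolding partition_points_def by blast
  then have "finite Cr" unfolding Cr_def by (auto intro!: finite_crossings cells)
  moreover have "Cr \<subseteq> {a..b}"
    using Y unfolding Cr_def crossings_def consecutive_def partition_points_def by fastforce
  ultimately have Z: "partition_points a b (Y \<union> Cr)" using Y unfolding partition_points_def by auto
  have "sorting_cell n nu F c d" if cd: "consecutive (Y \<union> Cr) c d" for c d
  proof -
    obtain c0 d0 where c0d0: "consecutive Y c0 d0" "{c..d} \<subseteq> {c0..d0}"
      using consecutive_coarsen[OF Y _ _ cd] Z unfolding partition_points_def by blast
    have "(\<forall>x\<in>{c..d}. F p x = F q x) \<or> (\<forall>x\<in>{c<..<d}. F p x \<noteq> F q x)" if "p < n" "q < n" for p q
    proof (cases "\<forall>y\<in>{c0..d0}. F p y = F q y")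
      case False
      have "x \<in> Cr" if "x \<in> {c<..<d}" "F p x = F q x" for x
        unfolding Cr_def crossings_def using c0d0 False \<open>p < n\<close> \<open>q < n\<close> that by fastforce
      then show ?thesis using cd unfolding consecutive_def by blast
    qed (use c0d0(2) in blast)
    then show ?thesis unfolding sorting_cell_def
      using cd cells[OF c0d0(1)] slopes_permute_subset[OF _ c0d0(2)] unfolding consecutive_def by blast
  qed
  with Z show ?thesis by blast
qed

lemma sorting_cell_le:
  assumes g: "sorting_cell n nu F c d" and pq: "p < n" "q < n"
    and mid: "F p ((c + d) / 2) \<le> F q ((c + d) / 2)" and x: "x \<in> {c..d}"
  shows "F p x \<le> F q x"
proof (rule ccontr)
  assume "\<not> F p x \<le> F q x"
  define M where "M = (c + d) / 2"
  have cd: "c < d" and M: "M \<in> {c<..<d}" using g unfolding M_def sorting_cell_def by auto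
  then have ne: "\<forall>y\<in>{c<..<d}. F p y \<noteq> F q y"
    using g pq \<open>\<not> F p x \<le> F q x\<close> x unfolding sorting_cell_def by fastforce
  obtain sl where "\<forall>j<n. affine_with_slope (F j) {c..d} (sl j)"
    using g unfolding sorting_cell_def slopes_permute_def by blast
  then obtain e1 e2 where e1: "\<forall>y\<in>{c..d}. F p y = sl p * y + e1" and e2: "\<forall>y\<in>{c..d}. F q y = sl q * y + e2"
    using pq unfolding affine_with_slope_def by meson
  define D where "D y = (sl q - sl p) * y + (e2 - e1)" for y
  have D: "D y = F q y - F p y" if "y \<in> {c..d}" for y using e1 e2 that unfolding D_def by (auto simp: algebra_simps)
  have "F p M \<noteq> F q M" using ne M by blast
  moreover have "M \<in> {c..d}" using M by auto
  ultimately have "D M > 0" using D[of M] mid[folded M_def] by linarith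
  have "D x < 0" using D[OF x] \<open>\<not> F p x \<le> F q x\<close> by simp
  define th where "th = D M / (D M - D x)"
  define z where "z = th * x + (1 - th) * M"
  have th: "0 < th" "th < 1" unfolding th_def using \<open>D M > 0\<close> \<open>D x < 0\<close> by (auto simp: field_simps)
  have "D z = th * D x + (1 - th) * D M" unfolding D_def z_def by (simp add: algebra_simps)
  also have "\<dots> = 0" unfolding th_def using \<open>D M > 0\<close> \<open>D x < 0\<close> by (simp add: field_simps)
  finally have "D z = 0" .
  have "th * c + (1 - th) * c < z" "z < th * d + (1 - th) * d"
    unfolding z_def using th M x by (intro add_le_less_mono mult_left_mono mult_strict_left_mono; simp)+
  then have "z \<in> {c<..<d}" by (simp add: algebra_simps)
  then show False using ne D[of z] \<open>D z = 0\<close> by force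
qed

definition order_stat :: "nat \<Rightarrow> (nat \<Rightarrow> real \<Rightarrow> real) \<Rightarrow> nat \<Rightarrow> real \<Rightarrow> real" where
  "order_stat n F i x = sort (map (\<lambda>j. F j x) [0..<n]) ! (i - 1)"

lemma order_stat_image: "(\<lambda>i. order_stat n F i x) ` {1..n} = (\<lambda>j. F j x) ` {0..<n}"
proof -
  let ?L = "sort (map (\<lambda>j. F j x) [0..<n])"
  have "{1..n} = Suc ` {0..<n}" by (auto simp: image_Suc_atLeastLessThan)
  then have "(\<lambda>i. order_stat n F i x) ` {1..n} = (\<lambda>j. ?L ! j) ` {0..<n}"
    unfolding order_stat_def by (simp only: image_image) simp
  also have "\<dots> = set ?L" by (auto simp: set_conv_nth)
  finally show ?thesis by simp
qed

lemma order_stat_mono: "i \<in> {1..<n} \<Longrightarrow> order_stat n F i x \<le> order_stat n F (Suc i) x"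
  unfolding order_stat_def by (rule sorted_nth_mono) auto

lemma nu_graph_of_order_stat:
  "nu_graph_of n (order_stat n F) = (\<Union>j\<in>{0..<n}. {(x, F j x) | x. 0 \<le> x})"
proof -
  have "nu_graph_of n (order_stat n F) = {(x, y) | x y. 0 \<le> x \<and> y \<in> (\<lambda>i. order_stat n F i x) ` {1..n}}"
    unfolding nu_graph_of_def by auto
  also have "\<dots> = (\<Union>j\<in>{0..<n}. {(x, F j x) | x. 0 \<le> x})"
    unfolding order_stat_image by auto
  finally show ?thesis .
qed

text \<open>The permutation \<open>ps\<close> sorts the lines by their values at the midpoint of the cell.\<close>
lemma sorting_cell_order_stat:
  assumes g: "sorting_cell n nu F c d"
  obtains ps where "mset ps = mset [0..<n]"
    and "\<And>x i. x \<in> {c..d} \<Longrightarrow> i \<in> {1..n} \<Longrightarrow> order_stat n F i x = F (ps ! (i - 1)) x"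
proof
  define ps where "ps = sort_key (\<lambda>j. F j ((c + d) / 2)) [0..<n]"
  show mps: "mset ps = mset [0..<n]" by (simp add: ps_def)
  then have lps: "length ps = n" and setps: "set ps = {0..<n}"
    by (metis length_upt mset_eq_length minus_nat.diff_0, metis set_mset_mset set_upt)
  have sm: "sorted (map (\<lambda>j. F j ((c + d) / 2)) ps)" by (simp add: ps_def)
  fix x i assume x: "x \<in> {c..d}" and i: "i \<in> {1..n}"
  have "sort (map (\<lambda>j. F j x) [0..<n]) = map (\<lambda>j. F j x) ps"
  proof (rule properties_for_sort)
    show "mset (map (\<lambda>j. F j x) ps) = mset (map (\<lambda>j. F j x) [0..<n])" by (simp only: mset_map mps)
    have "F (ps ! i) x \<le> F (ps ! j) x" if "i \<le> j" "j < n" for i j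
      using sorted_nth_mono[OF sm, of i j] that lps setps nth_mem
      by (intro sorting_cell_le[OF g _ _ _ x]) fastforce+
    then show "sorted (map (\<lambda>j. F j x) ps)" unfolding sorted_iff_nth_mono using lps by simp
  qed
  then show "order_stat n F i x = F (ps ! (i - 1)) x" using i lps unfolding order_stat_def by auto
qed

lemma sorting_cell_slopes:
  assumes "sorting_cell n nu F c d"
  shows "\<exists>sl. (\<forall>i\<in>{1..n}. affine_with_slope (order_stat n F i) {c..d} (sl i)) \<and>
    mset (map sl [1..<n+1]) = mset nu"
proof -
  obtain ps where ps: "mset ps = mset [0..<n]"
    and P: "\<And>x i. x \<in> {c..d} \<Longrightarrow> i \<in> {1..n} \<Longrightarrow> order_stat n F i x = F (ps ! (i - 1)) x"
    using sorting_cell_order_stat[OF assms] by blast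
  obtain sl0 where sl0: "\<forall>j<n. affine_with_slope (F j) {c..d} (sl0 j)" "mset (map sl0 [0..<n]) = mset nu"
    using assms unfolding sorting_cell_def slopes_permute_def by blast
  have lps: "length ps = n" and setps: "set ps = {0..<n}" using ps
    by (metis length_upt mset_eq_length minus_nat.diff_0, metis set_mset_mset set_upt)
  define sl where "sl i = sl0 (ps ! (i - 1))" for i
  have "affine_with_slope (order_stat n F i) {c..d} (sl i)" if i: "i \<in> {1..n}" for i
  proof -
    have "ps ! (i - 1) < n" using i lps setps nth_mem by fastforce
    then show ?thesis
      using sl0(1) P[OF _ i] unfolding affine_with_slope_def sl_def by simp
  qed
  moreover have "map sl [1..<n+1] = map sl0 ps"
  proof -
    have "[1..<n+1] = map Suc [0..<length ps]" using lps by (simp add: map_Suc_upt)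
    then have "map sl [1..<n+1] = map (\<lambda>i. sl0 (ps ! i)) [0..<length ps]"
      by (simp add: sl_def)
    also have "\<dots> = map sl0 (map (nth ps) [0..<length ps])" by simp
    finally show ?thesis by (simp only: map_nth)
  qed
  moreover have "mset (map sl0 ps) = mset nu" using ps sl0(2) by (simp only: mset_map)
  ultimately show ?thesis by metis
qed

context
  fixes n :: nat and nu :: "real list" and F :: "nat \<Rightarrow> real \<Rightarrow> real" and K :: real
  assumes linear_bound: "\<And>j x. j < n \<Longrightarrow> 0 \<le> x \<Longrightarrow> \<bar>F j x\<bar> \<le> K * x"
    and slope_partition: "\<And>a b. 0 < a \<Longrightarrow> a < b \<Longrightarrow>
      \<exists>Y. partition_points a b Y \<and> (\<forall>c d. consecutive Y c d \<longrightarrow> slopes_permute n nu F c d)"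
begin

lemma sorting_partition:
  "0 < a \<Longrightarrow> a < b \<Longrightarrow>
    \<exists>Z. partition_points a b Z \<and> (\<forall>c d. consecutive Z c d \<longrightarrow> sorting_cell n nu F c d)"
  using slope_partition exists_sorting_partition[of a b _ n nu F] by blast

lemma order_stat_slopes_inside:
  assumes "0 \<le> c" "c < d"
  shows "\<exists>a e sl. a < e \<and> {a..e} \<subseteq> {c..d} \<and>
    (\<forall>i\<in>{1..n}. affine_with_slope (order_stat n F i) {a..e} (sl i)) \<and> mset (map sl [1..<n+1]) = mset nu"
proof -
  define x where "x = (c + d) / 2"
  have x: "0 < x" "x < d" using assms unfolding x_def by auto
  then obtain Z where Z: "partition_points x d Z" "\<And>a e. consecutive Z a e \<Longrightarrow> sorting_cell n nu F a e"
    using sorting_partition by blast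
  moreover have "x \<in> {x..d}" using x by simp
  ultimately obtain a e where ae: "consecutive Z a e" "x \<in> {a..e}"
    using partition_points_cover[OF Z(1) x(2)] by blast
  then have "{a..e} \<subseteq> {x..d}" "a < e" using Z(1) unfolding consecutive_def partition_points_def by auto
  moreover have "{x..d} \<subseteq> {c..d}" using assms unfolding x_def by auto
  ultimately show ?thesis using sorting_cell_slopes[OF Z(2)[OF ae(1)]] by blast
qed

lemma order_stat_isCont:
  assumes "0 < x" "i \<in> {1..n}"
  shows "isCont (order_stat n F i) x"
proof -
  have "0 < x / 2" "x / 2 < 2 * x" using assms by auto
  then obtain Z where Z: "partition_points (x / 2) (2 * x) Z"
    and cell: "\<And>c d. consecutive Z c d \<Longrightarrow> sorting_cell n nu F c d"
    using sorting_partition by blast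
  define C where "C = {(c, d). consecutive Z c d}"
  have "C \<subseteq> Z \<times> Z" unfolding C_def consecutive_def by auto
  then have "finite C" using Z finite_subset unfolding partition_points_def by blast
  moreover have "continuous_on {c..d} (order_stat n F i)" if "(c, d) \<in> C" for c d
    using sorting_cell_slopes[OF cell] that assms(2) affine_with_slope_continuous_on
    unfolding C_def by fastforce
  ultimately have "continuous_on (\<Union>(c, d)\<in>C. {c..d}) (order_stat n F i)"
    by (intro continuous_on_closed_Union) auto
  moreover have "(\<Union>(c, d)\<in>C. {c..d}) = {x / 2..2 * x}"
  proof
    show "(\<Union>(c, d)\<in>C. {c..d}) \<subseteq> {x / 2..2 * x}"
      using Z unfolding C_def consecutive_def partition_points_def by fastforce
    show "{x / 2..2 * x} \<subseteq> (\<Union>(c, d)\<in>C. {c..d})"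
      using partition_points_cover[OF Z] \<open>x / 2 < 2 * x\<close> unfolding C_def by fastforce
  qed
  moreover have "x \<in> interior {x / 2..2 * x}" using assms(1) by simp
  ultimately show ?thesis using continuous_on_interior by metis
qed

lemma order_stat_bound:
  assumes "i \<in> {1..n}" "0 \<le> x"
  shows "\<bar>order_stat n F i x\<bar> \<le> K * x"
proof -
  have "order_stat n F i x \<in> (\<lambda>j. F j x) ` {0..<n}"
    using order_stat_image[of n F x] assms(1) by blast
  then obtain j where "j < n" "order_stat n F i x = F j x" by auto
  then show ?thesis using linear_bound assms(2) by simp
qed

lemma order_stat_continuous_on:
  assumes "i \<in> {1..n}"
  shows "continuous_on {0..} (order_stat n F i)"
  unfolding continuous_on_eq_continuous_within
proof
  fix x :: real assume "x \<in> {0..}"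
  show "continuous (at x within {0..}) (order_stat n F i)"
  proof (cases "x = 0")
    case True
    have P0: "order_stat n F i 0 = 0" using order_stat_bound[OF assms, of 0] by simp
    have "eventually (\<lambda>y. norm (order_stat n F i y) \<le> K * y) (at 0 within {0..})"
      unfolding eventually_at_filter by (intro always_eventually) (simp add: order_stat_bound[OF assms])
    moreover have "((\<lambda>y. K * y) \<longlongrightarrow> K * 0) (at 0 within {0..})"
      by (intro tendsto_intros)
    ultimately show ?thesis unfolding True continuous_within P0 by (simp add: Lim_null_comparison)
  next
    case False
    then have "0 < x" using \<open>x \<in> {0..}\<close> by simp
    then show ?thesis using continuous_at_imp_continuous_within order_stat_isCont[OF _ assms] by blast
  qed
qed

lemma order_stat_piecewise_affine:
  assumes "0 < a" "a < b"
  shows "\<exists>Z. partition_points a b Z \<and>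
    (\<forall>c d. consecutive Z c d \<longrightarrow> (\<forall>i\<in>{1..n}. \<exists>s. affine_with_slope (order_stat n F i) {c..d} s))"
  using sorting_partition[OF assms] sorting_cell_slopes by meson

lemma order_stat_slope_in_nu:
  assumes "i \<in> {1..n}" "0 \<le> c" "c < d" "affine_with_slope (order_stat n F i) {c..d} s"
  shows "s \<in> set nu"
proof -
  obtain a e sl where ae: "a < e" "{a..e} \<subseteq> {c..d}"
    and sl: "\<forall>i\<in>{1..n}. affine_with_slope (order_stat n F i) {a..e} (sl i)" "mset (map sl [1..<n+1]) = mset nu"
    using order_stat_slopes_inside assms(2,3) by blast
  have "s = sl i"
    using affine_with_slope_unique[OF affine_with_slope_subset[OF assms(4) ae(2)] sl(1)[rule_format, OF assms(1)] ae(1)] .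
  moreover have "i \<in> set [1..<n+1]" using assms(1) by auto
  then have "sl i \<in> set (map sl [1..<n+1])" unfolding set_map by (rule imageI)
  ultimately show ?thesis using sl(2) by (metis set_mset_mset)
qed

lemma mset_order_stat_slopes:
  assumes "0 \<le> c" "c < d" "\<forall>i\<in>{1..n}. affine_with_slope (order_stat n F i) {c..d} (S i)"
  shows "mset (map S [1..<n+1]) = mset nu"
proof -
  obtain a e sl where ae: "a < e" "{a..e} \<subseteq> {c..d}"
    and sl: "\<forall>i\<in>{1..n}. affine_with_slope (order_stat n F i) {a..e} (sl i)" "mset (map sl [1..<n+1]) = mset nu"
    using order_stat_slopes_inside assms(1,2) by blast
  have "S i = sl i" if "i \<in> {1..n}" for i
    using affine_with_slope_unique[OF affine_with_slope_subset[OF _ ae(2)] _ ae(1)] assms(3) sl(1) that by blast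
  then have "map S [1..<n+1] = map sl [1..<n+1]" by (intro map_cong) auto
  then show ?thesis using sl(2) by (simp only:)
qed

lemma nu_system_order_stat: "nu_system n nu (order_stat n F)"
  unfolding nu_system_def
proof (intro conjI ballI allI impI)
  fix a b :: real assume "0 < a" "a < b"
  then obtain Z where "partition_points a b Z"
    "\<forall>c d. consecutive Z c d \<longrightarrow> (\<forall>i\<in>{1..n}. \<exists>s. affine_with_slope (order_stat n F i) {c..d} s)"
    using order_stat_piecewise_affine by blast
  then show "\<exists>X. finite X \<and> a \<in> X \<and> b \<in> X \<and> X \<subseteq> {a..b} \<and>
      (\<forall>c\<in>X. \<forall>d\<in>X. c < d \<longrightarrow> {c<..<d} \<inter> X = {} \<longrightarrow>
        (\<forall>i\<in>{1..n}. \<exists>s. affine_with_slope (order_stat n F i) {c..d} s))"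
    unfolding partition_points_def consecutive_def by (intro exI[of _ Z]) blast
next
  fix c d :: real assume "0 \<le> c" "c < d"
    and "\<forall>i\<in>{1..n}. \<exists>s. affine_with_slope (order_stat n F i) {c..d} s"
  then show "\<exists>s. (\<forall>i\<in>{1..n}. affine_with_slope (order_stat n F i) {c..d} (s i)) \<and>
      mset (map s [1..<n+1]) = mset nu"
    using bchoice mset_order_stat_slopes by metis
qed (use order_stat_continuous_on order_stat_bound[of _ 0] order_stat_mono order_stat_slope_in_nu in auto)

end

section \<open>The scale \<open>\<sigma>\<close>\<close>

locale rho_scale =
  fixes k :: nat and rho :: "nat \<Rightarrow> real"
  assumes k_pos: "0 < k" and rho_gt_1: "\<forall>i\<in>{1..k}. 1 < rho i"
begin

abbreviation \<tau> :: real where "\<tau> \<equiv> tau_of k rho"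
abbreviation \<sigma> :: "int \<Rightarrow> real" where "\<sigma> \<equiv> sigma_of k rho"

lemma prod_rho_ge_1: "h \<le> k \<Longrightarrow> 1 \<le> (\<Prod>i\<in>{1..h}. rho i)"
  using rho_gt_1 by (intro prod_ge_1) (auto intro: less_imp_le)

lemma tau_eq: "\<tau> = (\<Prod>i\<in>{1..k-1}. rho i) * rho k"
proof -
  have "{1..k} = insert k {1..k-1}" "k \<notin> {1..k-1}" using k_pos by auto
  then show ?thesis unfolding tau_of_def by (simp add: mult.commute)
qed

lemma tau_gt_1: "1 < \<tau>"
  using mult_le_less_imp_less[of 1 "\<Prod>i\<in>{1..k-1}. rho i" 1 "rho k"] prod_rho_ge_1[of "k - 1"]
    rho_gt_1 k_pos unfolding tau_eq by simp

lemma sigma_add_period: "\<sigma> (r + t * int k) = \<tau> powi t * \<sigma> r"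
proof -
  have "(r + t * int k) div int k = t + r div int k" using k_pos by simp
  then show ?thesis unfolding sigma_of_def using tau_gt_1
    by (simp add: power_int_add mult.assoc)
qed

lemma sigma_period: "\<sigma> (t * int k) = \<tau> powi t"
  using sigma_add_period[of 0 t] by (simp add: sigma_of_def)

lemma sigma_pos: "0 < \<sigma> s"
proof -
  have "nat (s mod int k) \<le> k" using k_pos by (simp add: nat_le_iff order_less_imp_le)
  then have "0 < (\<Prod>i\<in>{1..nat (s mod int k)}. rho i)" using prod_rho_ge_1 by fastforce
  then show ?thesis unfolding sigma_of_def using tau_gt_1 by (simp add: zero_less_power_int)
qed

lemma sigma_succ: "\<sigma> (s + 1) = rho (nat (s mod int k) + 1) * \<sigma> s"
proof -
  define h q where "h = s mod int k" and "q = s div int k"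
  have s: "s = h + q * int k" and h: "0 \<le> h" "h < int k" unfolding h_def q_def using k_pos by auto
  have "\<sigma> (h + 1) = rho (nat h + 1) * \<sigma> h"
  proof (cases "h + 1 < int k")
    case True
    then have "{1..nat (h + 1)} = insert (nat h + 1) {1..nat h}" using h by auto
    then show ?thesis unfolding sigma_of_def using h True by simp
  next
    case False
    then have "h + 1 = 1 * int k" "nat h = k - 1" using h by auto
    then show ?thesis using sigma_period[of 1] k_pos unfolding tau_eq by (simp add: sigma_of_def h)
  qed
  moreover have "\<sigma> (s + 1) = \<tau> powi q * \<sigma> (h + 1)" "\<sigma> s = \<tau> powi q * \<sigma> h"
    using sigma_add_period[of "h + 1" q] sigma_add_period[of h q] s by (simp_all add: algebra_simps)
  ultimately show ?thesis unfolding h_def by simp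
qed

lemma strict_mono_sigma: "strict_mono \<sigma>"
proof (rule strict_monoI)
  have step: "\<sigma> s < \<sigma> (s + 1)" for s
  proof -
    have "0 \<le> s mod int k" "s mod int k < int k" using k_pos by auto
    then have "nat (s mod int k) + 1 \<in> {1..k}" by simp
    then show ?thesis using sigma_succ rho_gt_1 sigma_pos by simp
  qed
  show "\<sigma> a < \<sigma> b" if "a < b" for a b
    using that by (induction b rule: int_gr_induct) (use step less_trans in auto)
qed

lemma sigma_less_iff: "\<sigma> a < \<sigma> b \<longleftrightarrow> a < b"
  using strict_mono_less[OF strict_mono_sigma] .

lemma sigma_le_iff: "\<sigma> a \<le> \<sigma> b \<longleftrightarrow> a \<le> b"
  using strict_mono_less_eq[OF strict_mono_sigma] .

lemma sigma_below: "0 < x \<Longrightarrow> \<exists>a. \<sigma> a < x"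
proof -
  assume "0 < x"
  obtain N where "1 / x < \<tau> ^ N" using real_arch_pow[OF tau_gt_1] by blast
  then have "\<sigma> (- int N * int k) < x"
    unfolding sigma_period using \<open>0 < x\<close> tau_gt_1 by (simp add: power_int_minus field_simps)
  then show ?thesis by blast
qed

lemma sigma_above: "\<exists>b. x < \<sigma> b"
proof -
  obtain N where "x < \<tau> ^ N" using real_arch_pow[OF tau_gt_1] by blast
  then have "x < \<sigma> (int N * int k)" unfolding sigma_period by simp
  then show ?thesis by blast
qed

lemma sigma_cell_exists:
  assumes "0 < x"
  shows "\<exists>s. \<sigma> s \<le> x \<and> x < \<sigma> (s + 1)"
proof -
  obtain a b where ab: "\<sigma> a < x" "x < \<sigma> b" using sigma_below[OF assms] sigma_above by blast
  define L where "L = {t\<in>{a..b}. \<sigma> t \<le> x}"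
  have "a < b" using ab sigma_less_iff by fastforce
  moreover have "L \<subseteq> {a..b}" unfolding L_def by blast
  ultimately have L: "finite L" "a \<in> L"
    using ab(1) finite_subset unfolding L_def by (blast, simp add: less_imp_le)
  define s where "s = Max L"
  have s: "s \<in> L" using Max_in[OF L(1)] L(2) unfolding s_def by auto
  have "x < \<sigma> (s + 1)"
  proof (rule ccontr)
    assume "\<not> x < \<sigma> (s + 1)"
    then have "\<sigma> (s + 1) < \<sigma> b" using ab(2) by linarith
    then have "s + 1 \<le> b" unfolding sigma_less_iff by simp
    then have "s + 1 \<in> L" using s \<open>\<not> x < \<sigma> (s + 1)\<close> unfolding L_def by auto
    then show False using Max_ge[OF L(1)] unfolding s_def by fastforce
  qed
  then show ?thesis using s unfolding L_def by blast
qed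

definition cell_index :: "real \<Rightarrow> int" where
  "cell_index x = (THE s. \<sigma> s \<le> x \<and> x < \<sigma> (s + 1))"

lemma sigma_cell_unique:
  assumes "\<sigma> s \<le> x" "x < \<sigma> (s + 1)" "\<sigma> t \<le> x" "x < \<sigma> (t + 1)"
  shows "s = t"
proof -
  have "\<sigma> s < \<sigma> (t + 1)" "\<sigma> t < \<sigma> (s + 1)" using assms by linarith+
  then show ?thesis unfolding sigma_less_iff by linarith
qed

lemma cell_index_eq: "\<sigma> s \<le> x \<Longrightarrow> x < \<sigma> (s + 1) \<Longrightarrow> cell_index x = s"
  unfolding cell_index_def by (rule the_equality) (auto intro: sigma_cell_unique)

lemma cell_index_bounds: "0 < x \<Longrightarrow> \<sigma> (cell_index x) \<le> x \<and> x < \<sigma> (cell_index x + 1)"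
  using sigma_cell_exists cell_index_eq by metis

lemma per_add_period: "per k w (r + t * int k) = per k w r"
  unfolding per_def by simp

lemma sigma_cell_between:
  assumes "a < b" "\<sigma> a \<le> x" "x \<le> \<sigma> b"
  shows "\<exists>t. a \<le> t \<and> t < b \<and> \<sigma> t \<le> x \<and> x \<le> \<sigma> (t + 1)"
proof (cases "x < \<sigma> b")
  case True
  define t where "t = cell_index x"
  have t: "\<sigma> t \<le> x" "x < \<sigma> (t + 1)" using cell_index_bounds assms(2) sigma_pos[of a] unfolding t_def by auto
  then have "a < t + 1" "t < b" using assms(2) True by (simp_all flip: sigma_less_iff)
  then show ?thesis using t by (intro exI[of _ t]) auto
next
  case False
  then show ?thesis using assms strict_mono_sigma[THEN strict_monoD, of "b - 1" b]
    by (intro exI[of _ "b - 1"]) auto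
qed

end

lemma cyc_add_period:
  assumes "l dvd k"
  shows "cyc l f (x + t * int k) = cyc l f x"
proof -
  obtain c where "k = l * c" using assms by blast
  then have "x + t * int k - 1 = (x - 1) + (t * int c) * int l" by (simp add: algebra_simps)
  then have "(x + t * int k - 1) mod int l = (x - 1) mod int l" by (simp only: mod_mult_self1)
  then show ?thesis unfolding cyc_def by simp
qed

lemma abs_cyc_le:
  assumes "0 < l"
  shows "\<bar>cyc l f x\<bar> \<le> (\<Sum>i=1..l. \<bar>f i\<bar>)"
proof -
  have "0 \<le> (x - 1) mod int l" "(x - 1) mod int l < int l" using assms by auto
  then have "nat ((x - 1) mod int l) + 1 \<in> {1..l}" by simp
  then show ?thesis unfolding cyc_def by (intro member_le_sum) auto
qed

lemma nat_mod_less: "0 < N \<Longrightarrow> nat (b mod int N) < N"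
  by (simp add: nat_less_iff)

lemma bij_betw_minus_mod:
  assumes "0 < N"
  shows "bij_betw (\<lambda>j::nat. nat ((c - int j) mod int N)) {0..<N} {0..<N}"
proof -
  have "inj_on (\<lambda>j::nat. nat ((c - int j) mod int N)) {0..<N}"
  proof
    fix i j assume ij: "i \<in> {0..<N}" "j \<in> {0..<N}"
      and "nat ((c - int i) mod int N) = nat ((c - int j) mod int N)"
    then have "(c - int i) mod int N = (c - int j) mod int N" using assms by (simp add: eq_nat_nat_iff)
    then have "int N dvd (c - int i) - (c - int j)" by (simp only: mod_eq_dvd_iff)
    then have dvd: "int N dvd int j - int i" by simp
    show "i = j"
    proof (rule ccontr)
      assume "i \<noteq> j"
      then have "int j - int i \<noteq> 0" by simp
      then have "\<bar>int N\<bar> \<le> \<bar>int j - int i\<bar>" using dvd by (rule dvd_imp_le_int)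
      then show False using ij by auto
    qed
  qed
  moreover have "(\<lambda>j::nat. nat ((c - int j) mod int N)) ` {0..<N} \<subseteq> {0..<N}"
    using assms by (simp add: image_subset_iff nat_less_iff)
  ultimately show ?thesis by (simp add: bij_betw_def endo_inj_surj)
qed

lemma mset_map_minus_mod:
  assumes "0 < N"
  shows "mset (map (\<lambda>j. g (nat ((c - int j) mod int N))) [0..<N]) = mset (map g [0..<N])"
proof -
  have "mset (map (\<lambda>j. g (nat ((c - int j) mod int N))) [0..<N])
      = image_mset g (image_mset (\<lambda>j::nat. nat ((c - int j) mod int N)) (mset_set {0..<N}))"
    by (simp add: image_mset.compositionality o_def)
  also have "\<dots> = image_mset g (mset_set {0..<N})"
    using bij_betw_minus_mod[OF assms, of c] by (simp add: bij_betw_def image_mset_mset_set)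
  finally show ?thesis by simp
qed

lemma mset_map_cyc:
  assumes "0 < l"
  shows "mset (map (\<lambda>j. cyc l f (c - int j)) [0..<l]) = mset (map f [1..<l+1])"
proof -
  have "cyc l f (c - int j) = (f \<circ> Suc) (nat ((c - 1 - int j) mod int l))" for j
    unfolding cyc_def by (simp add: algebra_simps)
  then have "mset (map (\<lambda>j. cyc l f (c - int j)) [0..<l]) = mset (map (f \<circ> Suc) [0..<l])"
    using mset_map_minus_mod[OF assms, of "f \<circ> Suc" "c - 1"] by simp
  also have "\<dots> = mset (map f [1..<l+1])"
  proof -
    have "[1..<l+1] = map Suc [0..<l]" by (simp add: map_Suc_upt)
    then show ?thesis by (simp only: map_map)
  qed
  finally show ?thesis .
qed

lemma closed_segment_eq_graph:
  fixes p1 p2 q1 q2 :: real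
  assumes "p1 < q1"
  shows "closed_segment (p1, p2) (q1, q2) =
    {(x, p2 + (q2 - p2) / (q1 - p1) * (x - p1)) | x. p1 \<le> x \<and> x \<le> q1}"
    (is "_ = ?G")
proof
  have d: "0 < q1 - p1" using assms by simp
  show "closed_segment (p1, p2) (q1, q2) \<subseteq> ?G"
  proof
    fix z assume "z \<in> closed_segment (p1, p2) (q1, q2)"
    then obtain t where t: "0 \<le> t" "t \<le> 1" "z = (1 - t) *\<^sub>R (p1, p2) + t *\<^sub>R (q1, q2)"
      unfolding closed_segment_def by blast
    define x where "x = p1 + t * (q1 - p1)"
    have "t * (q1 - p1) \<le> q1 - p1" using t d by (simp add: mult_left_le_one_le)
    then have "x \<le> q1" unfolding x_def by linarith
    moreover have "p1 \<le> x" using t d unfolding x_def by simp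
    moreover have "z = (x, p2 + (q2 - p2) / (q1 - p1) * (x - p1))"
      using t(3) d unfolding x_def by (simp add: field_simps)
    ultimately show "z \<in> ?G" by blast
  qed
  show "?G \<subseteq> closed_segment (p1, p2) (q1, q2)"
  proof
    fix z assume "z \<in> ?G"
    then obtain x where x: "p1 \<le> x" "x \<le> q1" "z = (x, p2 + (q2 - p2) / (q1 - p1) * (x - p1))" by blast
    define t where "t = (x - p1) / (q1 - p1)"
    have "t * (q1 - p1) = x - p1" using d unfolding t_def by simp
    then have "(1 - t) * p1 + t * q1 = x" by (simp add: algebra_simps)
    moreover have "(q2 - p2) / (q1 - p1) * (x - p1) = t * (q2 - p2)" unfolding t_def by simp
    then have "(1 - t) * p2 + t * q2 = p2 + (q2 - p2) / (q1 - p1) * (x - p1)" by (simp add: algebra_simps)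
    ultimately have "z = (1 - t) *\<^sub>R (p1, p2) + t *\<^sub>R (q1, q2)" using x(3) by simp
    moreover have "0 \<le> t" "t \<le> 1" unfolding t_def using x d by (auto simp: field_simps)
    ultimately show "z \<in> closed_segment (p1, p2) (q1, q2)" unfolding closed_segment_def by blast
  qed
qed

lemma closed_segment_scaleR_image:
  "(\<lambda>\<eta>. c *\<^sub>R \<eta>) ` closed_segment (a :: real \<times> real) b = closed_segment (c *\<^sub>R a) (c *\<^sub>R b)"
  by (rule closed_segment_linear_image[symmetric]) (rule bounded_linear.linear[OF bounded_linear_scaleR_right])

section \<open>The slope equations\<close>

locale slope_system = rho_scale +
  fixes l m :: nat and alpha beta :: "nat \<Rightarrow> real"
  assumes l_pos: "0 < l" and m_pos: "0 < m" and k_lcm: "k = lcm l m"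
begin

definition height :: "real list \<Rightarrow> int \<Rightarrow> real" where
  "height w s = \<sigma> s * per k w s"

definition riseA :: "int \<Rightarrow> real" where
  "riseA s = cyc l alpha (s + 1) * (\<sigma> (s + int l) - \<sigma> s)"

definition riseB :: "int \<Rightarrow> real" where
  "riseB s = - cyc m beta (s + 1) * (\<sigma> (s + int m) - \<sigma> s)"

text \<open>With \<open>s = r + t k\<close>, \<open>\<A>\<^sub>r\<^sup>t\<close> and \<open>\<B>\<^sub>r\<^sup>t\<close> are the segments from \<open>(\<sigma> s, height u s)\<close> to
  \<open>(\<sigma> (s + l), height v (s + l))\<close> and from \<open>(\<sigma> s, height v s)\<close> to \<open>(\<sigma> (s + m), height u (s + m))\<close>.\<close>
definition slope_equations :: "real list \<Rightarrow> real list \<Rightarrow> bool" where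
  "slope_equations u v \<longleftrightarrow> (\<forall>s. height v (s + int l) = height u s + riseA s \<and>
                                 height u (s + int m) = height v s + riseB s)"

lemma pt_eq: "pt k rho w r t = (\<sigma> (r + t * int k), height w (r + t * int k))"
  unfolding pt_def height_def sigma_add_period per_add_period by simp

lemma cyc_alpha_add_period: "cyc l alpha (x + t * int k) = cyc l alpha x"
  using cyc_add_period k_lcm by simp

lemma cyc_beta_add_period: "cyc m beta (x + t * int k) = cyc m beta x"
  using cyc_add_period k_lcm by simp

lemma slope_A_iff:
  "slope (pt k rho u r t) (pt k rho v (r + int l) t) = cyc l alpha (r + 1) \<longleftrightarrow>
    height v (r + t * int k + int l) = height u (r + t * int k) + riseA (r + t * int k)"
proof -
  let ?s = "r + t * int k"
  have "\<sigma> ?s < \<sigma> (?s + int l)" using l_pos by (simp add: sigma_less_iff)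
  moreover have "cyc l alpha (r + 1) = cyc l alpha (?s + 1)"
    using cyc_alpha_add_period[of "r + 1" t] by (simp add: algebra_simps)
  moreover have "r + int l + t * int k = ?s + int l" by simp
  ultimately show ?thesis unfolding pt_eq slope_def riseA_def by (simp add: divide_eq_eq algebra_simps)
qed

lemma slope_B_iff:
  "slope (pt k rho v r t) (pt k rho u (r + int m) t) = - cyc m beta (r + 1) \<longleftrightarrow>
    height u (r + t * int k + int m) = height v (r + t * int k) + riseB (r + t * int k)"
proof -
  let ?s = "r + t * int k"
  have "\<sigma> ?s < \<sigma> (?s + int m)" using m_pos by (simp add: sigma_less_iff)
  moreover have "cyc m beta (r + 1) = cyc m beta (?s + 1)"
    using cyc_beta_add_period[of "r + 1" t] by (simp add: algebra_simps)
  moreover have "r + int m + t * int k = ?s + int m" by simp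
  ultimately show ?thesis unfolding pt_eq slope_def riseB_def by (simp add: divide_eq_eq algebra_simps)
qed

lemma slope_conditions_iff:
  "(\<forall>r\<in>{0..<int k}. \<forall>t::int.
      slope (pt k rho u r t) (pt k rho v (r + int l) t) = cyc l alpha (r + 1) \<and>
      slope (pt k rho v r t) (pt k rho u (r + int m) t) = - cyc m beta (r + 1))
   \<longleftrightarrow> slope_equations u v"
proof -
  have "\<exists>r\<in>{0..<int k}. \<exists>t. s = r + t * int k" for s
    using k_pos by (intro bexI[of _ "s mod int k"] exI[of _ "s div int k"]) auto
  then show ?thesis unfolding slope_equations_def slope_A_iff slope_B_iff by metis
qed

definition rise :: "int \<Rightarrow> real" where
  "rise s = riseA s + riseB (s + int l)"

lemma riseA_add_period: "riseA (s + t * int k) = \<tau> powi t * riseA s"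
proof -
  have "\<sigma> (s + t * int k + int l) = \<tau> powi t * \<sigma> (s + int l)"
    using sigma_add_period[of "s + int l" t] by (simp add: algebra_simps)
  moreover have "cyc l alpha (s + t * int k + 1) = cyc l alpha (s + 1)"
    using cyc_alpha_add_period[of "s + 1" t] by (simp add: algebra_simps)
  ultimately show ?thesis unfolding riseA_def sigma_add_period by (simp add: algebra_simps)
qed

lemma riseB_add_period: "riseB (s + t * int k) = \<tau> powi t * riseB s"
proof -
  have "\<sigma> (s + t * int k + int m) = \<tau> powi t * \<sigma> (s + int m)"
    using sigma_add_period[of "s + int m" t] by (simp add: algebra_simps)
  moreover have "cyc m beta (s + t * int k + 1) = cyc m beta (s + 1)"
    using cyc_beta_add_period[of "s + 1" t] by (simp add: algebra_simps)
  ultimately show ?thesis unfolding riseB_def sigma_add_period by (simp add: algebra_simps)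
qed

lemma rise_add_period: "rise (s + t * int k) = \<tau> powi t * rise s"
  using riseB_add_period[of "s + int l" t]
  unfolding rise_def riseA_add_period by (simp add: algebra_simps)

lemma height_add_period: "height w (s + t * int k) = \<tau> powi t * height w s"
  unfolding height_def sigma_add_period per_add_period by simp

lemma tau_power_gt_1: "1 < \<tau> ^ (l + m)"
  using tau_gt_1 l_pos by (simp add: one_less_power)

text \<open>Iterating \<open>H(s + l + m) = H(s) + rise s\<close> \<open>k\<close> times and comparing with
  \<open>H(s + k (l + m)) = \<tau>\<^sup>l\<^sup>+\<^sup>m H(s)\<close> gives this closed form.\<close>
definition X_sol :: "int \<Rightarrow> real" where
  "X_sol s = (\<Sum>i<k. rise (s + int i * int (l + m))) / (\<tau> ^ (l + m) - 1)"

definition Y_sol :: "int \<Rightarrow> real" where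
  "Y_sol s = X_sol (s - int l) + riseA (s - int l)"

lemma X_sol_add_period: "X_sol (s + t * int k) = \<tau> powi t * X_sol s"
proof -
  have "rise (s + t * int k + int i * int (l + m)) = \<tau> powi t * rise (s + int i * int (l + m))" for i
    using rise_add_period[of "s + int i * int (l + m)" t] by (simp add: algebra_simps)
  then show ?thesis unfolding X_sol_def by (simp add: sum_distrib_left)
qed

lemma Y_sol_add_period: "Y_sol (s + t * int k) = \<tau> powi t * Y_sol s"
proof -
  have e: "s + t * int k - int l = (s - int l) + t * int k" by simp
  show ?thesis unfolding Y_sol_def e X_sol_add_period riseA_add_period by (simp add: algebra_simps)
qed

lemma X_sol_step: "X_sol (s + int (l + m)) = X_sol s + rise s"
proof -
  let ?f = "\<lambda>i. rise (s + int i * int (l + m))"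
  have "?f k = rise (s + int (l + m) * int k)" by (simp only: mult.commute)
  also have "\<dots> = \<tau> ^ (l + m) * rise s" by (simp only: rise_add_period power_int_of_nat)
  finally have "?f k = \<tau> ^ (l + m) * rise s" .
  moreover have "(\<Sum>i<k. rise (s + int (l + m) + int i * int (l + m))) = (\<Sum>i<k. ?f (Suc i))"
    by (simp add: algebra_simps)
  moreover have "(\<Sum>i<k. ?f (Suc i)) = (\<Sum>i<k. ?f i) + ?f k - ?f 0"
    using sum.lessThan_Suc_shift[of ?f k] sum.lessThan_Suc[of ?f k] by simp
  ultimately have "(\<Sum>i<k. rise (s + int (l + m) + int i * int (l + m))) =
      (\<Sum>i<k. ?f i) + (\<tau> ^ (l + m) - 1) * rise s" by (simp add: algebra_simps)
  then show ?thesis using tau_power_gt_1 unfolding X_sol_def by (simp add: field_simps)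
qed

lemma height_u_eq_X_sol:
  assumes "slope_equations u v"
  shows "height u s = X_sol s"
proof -
  let ?X = "height u"
  have step: "?X (s + int (l + m)) = ?X s + rise s" for s
  proof -
    have "height v (s + int l) = height u s + riseA s"
      "?X (s + int l + int m) = height v (s + int l) + riseB (s + int l)"
      using assms unfolding slope_equations_def by blast+
    then show ?thesis unfolding rise_def by (simp add: add.assoc)
  qed
  have iter: "?X (s + int i * int (l + m)) = ?X s + (\<Sum>j<i. rise (s + int j * int (l + m)))" for i
  proof (induction i)
    case (Suc i)
    have "?X (s + int (Suc i) * int (l + m)) = ?X ((s + int i * int (l + m)) + int (l + m))"
      by (simp add: algebra_simps)
    also have "\<dots> = ?X (s + int i * int (l + m)) + rise (s + int i * int (l + m))" by (rule step)
    finally show ?case using Suc by simp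
  qed simp
  have "\<tau> ^ (l + m) * ?X s = ?X (s + int (l + m) * int k)"
    by (simp only: height_add_period power_int_of_nat)
  also have "\<dots> = ?X s + (\<Sum>j<k. rise (s + int j * int (l + m)))"
    using iter[of k] by (simp only: mult.commute)
  finally have "\<tau> ^ (l + m) * ?X s = ?X s + (\<Sum>j<k. rise (s + int j * int (l + m)))" .
  then have "(\<tau> ^ (l + m) - 1) * ?X s = (\<Sum>j<k. rise (s + int j * int (l + m)))"
    by (simp add: algebra_simps)
  then show ?thesis using tau_power_gt_1 unfolding X_sol_def by (simp add: field_simps)
qed

lemma height_v_eq_Y_sol:
  assumes "slope_equations u v"
  shows "height v s = Y_sol s"
  using assms height_u_eq_X_sol[OF assms, of "s - int l"]
  unfolding slope_equations_def Y_sol_def by (metis diff_add_cancel)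

lemma height_list_of:
  assumes "\<And>s t. G (s + t * int k) = \<tau> powi t * G s"
  shows "height (map (\<lambda>r. G (int r) / \<sigma> (int r)) [0..<k]) s = G s"
proof -
  define h q where "h = s mod int k" and "q = s div int k"
  have s: "s = h + q * int k" and h: "0 \<le> h" "h < int k" unfolding h_def q_def using k_pos by auto
  then have "per k (map (\<lambda>r. G (int r) / \<sigma> (int r)) [0..<k]) s = G h / \<sigma> h"
    unfolding per_def h_def[symmetric] by (simp add: nat_less_iff)
  then show ?thesis unfolding height_def
    using s assms[of h q] sigma_add_period[of h q] sigma_pos[of h] by simp
qed

definition u_sol :: "real list" where "u_sol = map (\<lambda>r. X_sol (int r) / \<sigma> (int r)) [0..<k]"
definition v_sol :: "real list" where "v_sol = map (\<lambda>r. Y_sol (int r) / \<sigma> (int r)) [0..<k]"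

lemma slope_equations_sol: "slope_equations u_sol v_sol"
proof -
  have X: "height u_sol s = X_sol s" and Y: "height v_sol s = Y_sol s" for s
    unfolding u_sol_def v_sol_def using height_list_of X_sol_add_period Y_sol_add_period by blast+
  have "X_sol (s + int m) = X_sol (s - int l) + rise (s - int l)" for s
    using X_sol_step[of "s - int l"] by (simp add: algebra_simps)
  then show ?thesis unfolding slope_equations_def X Y Y_sol_def rise_def by simp
qed

lemma list_eq_of_height:
  assumes "length w = k" "length w' = k" "\<And>s. height w s = height w' s"
  shows "w = w'"
proof (rule nth_equalityI)
  fix r assume "r < length w"
  then have "int r mod int k = int r" using assms(1) by simp
  then show "w ! r = w' ! r"
    using assms(3)[of "int r"] sigma_pos[of "int r"] unfolding height_def per_def by simp
qed (use assms in simp)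

lemma slope_equations_unique:
  "\<exists>!uv. length (fst uv) = k \<and> length (snd uv) = k \<and> slope_equations (fst uv) (snd uv)"
proof (rule ex1I[of _ "(u_sol, v_sol)"])
  show "length (fst (u_sol, v_sol)) = k \<and> length (snd (u_sol, v_sol)) = k \<and>
      slope_equations (fst (u_sol, v_sol)) (snd (u_sol, v_sol))"
    using slope_equations_sol unfolding u_sol_def v_sol_def by simp
  fix uv assume uv: "length (fst uv) = k \<and> length (snd uv) = k \<and> slope_equations (fst uv) (snd uv)"
  have "height (fst uv) s = height u_sol s" "height (snd uv) s = height v_sol s" for s
    using uv slope_equations_sol height_u_eq_X_sol height_v_eq_Y_sol by metis+
  then show "uv = (u_sol, v_sol)"
    using uv list_eq_of_height unfolding u_sol_def v_sol_def by (simp add: prod_eq_iff)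
qed

end

section \<open>The threads of the graph\<close>

lemma abs_affine_le:
  fixes h c x y H C :: real
  assumes "0 < y" "y \<le> x" "\<bar>h\<bar> \<le> y * H" "\<bar>c\<bar> \<le> C"
  shows "\<bar>h + c * (x - y)\<bar> \<le> (H + C) * x"
proof -
  have "0 \<le> H" using assms(1,3) by (smt (verit) mult_pos_neg)
  have "\<bar>h + c * (x - y)\<bar> \<le> y * H + C * (x - y)"
    using assms by (intro abs_triangle_ineq[THEN order_trans] add_mono) (auto simp: abs_mult intro: mult_mono)
  also have "\<dots> \<le> x * H + x * C"
    using assms \<open>0 \<le> H\<close> by (intro add_mono) (auto intro: mult_right_mono simp: mult.commute mult_left_mono)
  finally show ?thesis by (simp add: algebra_simps)
qed

locale slope_solution = slope_system +
  fixes u v :: "real list"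
  assumes equations: "slope_equations u v"
begin

definition lineA :: "int \<Rightarrow> real \<Rightarrow> real" where
  "lineA s x = height u s + cyc l alpha (s + 1) * (x - \<sigma> s)"

definition lineB :: "int \<Rightarrow> real \<Rightarrow> real" where
  "lineB s x = height v s - cyc m beta (s + 1) * (x - \<sigma> s)"

lemma lineA_end: "lineA s (\<sigma> (s + int l)) = lineB (s + int l) (\<sigma> (s + int l))"
  using equations unfolding slope_equations_def lineA_def lineB_def riseA_def by simp

lemma lineB_end: "lineB s (\<sigma> (s + int m)) = lineA (s + int m) (\<sigma> (s + int m))"
  using equations unfolding slope_equations_def lineA_def lineB_def riseB_def by simp

text \<open>The graph is traced by \<open>l + m\<close> threads. On the cell \<open>[\<sigma> s, \<sigma> (s + 1)]\<close>, thread \<open>j\<close> has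
  run \<open>phase j s\<close> steps along its current period of length \<open>l + m\<close>, which first follows a segment
  \<open>\<A>\<close> (\<open>l\<close> cells) and then a segment \<open>\<B>\<close> (\<open>m\<close> cells).\<close>
definition phase :: "nat \<Rightarrow> int \<Rightarrow> int" where
  "phase j s = (s - int j) mod int (l + m)"

definition strand :: "nat \<Rightarrow> int \<Rightarrow> real \<Rightarrow> real" where
  "strand j s = (if phase j s < int l then lineA (s - phase j s) else lineB (s - phase j s + int l))"

definition strand_slope :: "nat \<Rightarrow> int \<Rightarrow> real" where
  "strand_slope j s = (if phase j s < int l then cyc l alpha (s - phase j s + 1)
                       else - cyc m beta (s - phase j s + int l + 1))"

lemma phase_bounds: "0 \<le> phase j s" "phase j s < int (l + m)"
  unfolding phase_def using l_pos by auto

lemma phase_eq: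
  assumes "0 \<le> s - b" "s - b < int (l + m)"
  shows "phase (nat (b mod int (l + m))) s = s - b"
proof -
  have "int (nat (b mod int (l + m))) = b mod int (l + m)" using l_pos by simp
  moreover have "b = b mod int (l + m) + (b div int (l + m)) * int (l + m)"
    by (rule mod_div_mult_eq[symmetric])
  ultimately have "s - int (nat (b mod int (l + m))) = (s - b) + (b div int (l + m)) * int (l + m)"
    by linarith
  then show ?thesis unfolding phase_def using assms by (simp only: mod_mult_self1) simp
qed

lemma strand_affine: "affine_with_slope (strand j s) S (strand_slope j s)"
proof (cases "phase j s < int l")
  case True
  define b where "b = s - phase j s"
  have "\<forall>x\<in>S. strand j s x = strand_slope j s * x + (height u b - cyc l alpha (b + 1) * \<sigma> b)"
    unfolding strand_def strand_slope_def lineA_def b_def[symmetric] using True by (simp add: algebra_simps)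
  then show ?thesis unfolding affine_with_slope_def by blast
next
  case False
  define b where "b = s - phase j s + int l"
  have "\<forall>x\<in>S. strand j s x = strand_slope j s * x + (height v b + cyc m beta (b + 1) * \<sigma> b)"
    unfolding strand_def strand_slope_def lineB_def b_def[symmetric] using False by (simp add: algebra_simps)
  then show ?thesis unfolding affine_with_slope_def by blast
qed

lemma phase_succ:
  "phase j (s + 1) = (if phase j s + 1 < int (l + m) then phase j s + 1 else 0)"
proof -
  define p q where "p = phase j s" and "q = (s - int j) div int (l + m)"
  have "s - int j = p + q * int (l + m)"
    unfolding p_def q_def phase_def by (rule mod_div_mult_eq[symmetric])
  then have sj: "s + 1 - int j = (p + 1) + q * int (l + m)" by simp
  have p: "0 \<le> p" "p < int (l + m)" unfolding p_def using phase_bounds by auto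
  show ?thesis
  proof (cases "p + 1 < int (l + m)")
    case True
    have "phase j (s + 1) = p + 1" unfolding phase_def sj using True p by (simp only: mod_mult_self1) simp
    then show ?thesis using True unfolding p_def by simp
  next
    case False
    then have "s + 1 - int j = 0 + (q + 1) * int (l + m)" using sj p by (simp add: algebra_simps)
    then have "phase j (s + 1) = 0" unfolding phase_def by (simp only: mod_mult_self1) simp
    then show ?thesis using False unfolding p_def by simp
  qed
qed

lemma strand_succ: "strand j s (\<sigma> (s + 1)) = strand j (s + 1) (\<sigma> (s + 1))"
proof -
  define p where "p = phase j s"
  have p: "0 \<le> p" "p < int (l + m)" unfolding p_def using phase_bounds by auto
  consider "p + 1 < int l" | "p + 1 = int l" | "int l < p + 1" "p + 1 < int (l + m)" | "p + 1 = int (l + m)"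
    using p by linarith
  then show ?thesis
  proof cases
    case 1
    then show ?thesis using phase_succ[of j s] unfolding strand_def p_def[symmetric] by simp
  next
    case 2
    then have e: "s - p + int l = s + 1" by simp
    show ?thesis using lineA_end[of "s - p", unfolded e] phase_succ[of j s] 2 m_pos
      unfolding strand_def p_def[symmetric] by (simp del: of_nat_add)
  next
    case 3
    then show ?thesis using phase_succ[of j s] unfolding strand_def p_def[symmetric] by simp
  next
    case 4
    then have e: "s - p + int l + int m = s + 1" by simp
    have "\<not> p < int l" using 4 m_pos by simp
    then show ?thesis using lineB_end[of "s - p + int l", unfolded e] phase_succ[of j s] 4 l_pos
      unfolding strand_def p_def[symmetric] by (simp del: of_nat_add)
  qed
qed

definition thread :: "nat \<Rightarrow> real \<Rightarrow> real" where
  "thread j x = (if x \<le> 0 then 0 else strand j (cell_index x) x)"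

lemma thread_eq_strand:
  assumes "\<sigma> s \<le> x" "x \<le> \<sigma> (s + 1)"
  shows "thread j x = strand j s x"
proof (cases "x < \<sigma> (s + 1)")
  case True
  then show ?thesis using assms cell_index_eq sigma_pos[of s] unfolding thread_def by simp
next
  case False
  then have "x = \<sigma> (s + 1)" "cell_index x = s + 1"
    using assms cell_index_eq[of "s + 1" x] strict_mono_sigma[THEN strict_monoD, of "s + 1" "s + 2"]
    by (auto simp: add.assoc)
  then show ?thesis using strand_succ sigma_pos[of "s + 1"] unfolding thread_def by simp
qed

lemma thread_affine: "affine_with_slope (thread j) {\<sigma> s..\<sigma> (s + 1)} (strand_slope j s)"
  using strand_affine[of j s "{\<sigma> s..\<sigma> (s + 1)}"] thread_eq_strand
  unfolding affine_with_slope_def by (metis atLeastAtMost_iff)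

lemma mset_strand_slopes:
  "mset (map (\<lambda>j. strand_slope j s) [0..<l + m]) =
    mset (map alpha [1..<l+1] @ map (\<lambda>j. - beta j) [1..<m+1])"
proof -
  define g where "g p = (if int p < int l then cyc l alpha (s - int p + 1)
                         else - cyc m beta (s - int p + int l + 1))" for p :: nat
  have "strand_slope j s = g (nat ((s - int j) mod int (l + m)))" for j
    using phase_bounds(1)[of j s] unfolding strand_slope_def g_def phase_def by simp
  then have "mset (map (\<lambda>j. strand_slope j s) [0..<l + m]) = mset (map g [0..<l + m])"
    using mset_map_minus_mod[of "l + m" g s] l_pos by simp
  also have "map g [0..<l + m] = map g [0..<l] @ map (\<lambda>i. g (i + l)) [0..<m]"
  proof -
    have "[0..<l + m] = [0..<l] @ map (\<lambda>i. i + l) [0..<m]"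
      using upt_add_eq_append[of 0 l m] map_add_upt[of l m] by (simp add: add.commute)
    then show ?thesis by simp
  qed
  also have "map g [0..<l] = map (\<lambda>p. cyc l alpha (s + 1 - int p)) [0..<l]"
    unfolding g_def by (intro map_cong) (auto simp: algebra_simps)
  also have "map (\<lambda>i. g (i + l)) [0..<m] = map (\<lambda>i. - cyc m beta (s + 1 - int i)) [0..<m]"
    unfolding g_def by (intro map_cong) (auto simp: algebra_simps)
  finally have "mset (map (\<lambda>j. strand_slope j s) [0..<l + m]) =
      mset (map (\<lambda>p. cyc l alpha (s + 1 - int p)) [0..<l]) +
      image_mset uminus (mset (map (\<lambda>i. cyc m beta (s + 1 - int i)) [0..<m]))"
    by (simp add: mset_map image_mset.compositionality o_def)
  also have "\<dots> = mset (map alpha [1..<l+1]) + image_mset uminus (mset (map beta [1..<m+1]))"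
    by (simp only: mset_map_cyc[OF l_pos] mset_map_cyc[OF m_pos])
  finally show ?thesis by (simp add: mset_map image_mset.compositionality o_def)
qed

lemma abs_per_le: "\<bar>per k w s\<bar> \<le> (\<Sum>i<k. \<bar>w ! i\<bar>)"
proof -
  have "0 \<le> s mod int k" "s mod int k < int k" using k_pos by auto
  then have "nat (s mod int k) \<in> {..<k}" by (simp add: nat_less_iff)
  then show ?thesis unfolding per_def by (intro member_le_sum) auto
qed

lemma abs_height_le: "\<bar>height w b\<bar> \<le> \<sigma> b * (\<Sum>i<k. \<bar>w ! i\<bar>)"
  unfolding height_def using abs_per_le sigma_pos[of b] by (simp add: abs_mult mult_left_mono)

lemma abs_lineA_le:
  "\<sigma> b \<le> x \<Longrightarrow> \<bar>lineA b x\<bar> \<le> ((\<Sum>i<k. \<bar>u ! i\<bar>) + (\<Sum>i=1..l. \<bar>alpha i\<bar>)) * x"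
  unfolding lineA_def using sigma_pos abs_height_le abs_cyc_le[OF l_pos]
  by (intro abs_affine_le) (auto intro: sum_nonneg)

lemma abs_lineB_le:
  "\<sigma> b \<le> x \<Longrightarrow> \<bar>lineB b x\<bar> \<le> ((\<Sum>i<k. \<bar>v ! i\<bar>) + (\<Sum>i=1..m. \<bar>beta i\<bar>)) * x"
proof -
  assume "\<sigma> b \<le> x"
  have "lineB b x = height v b + (- cyc m beta (b + 1)) * (x - \<sigma> b)" unfolding lineB_def by simp
  then show ?thesis using \<open>\<sigma> b \<le> x\<close> sigma_pos abs_height_le abs_cyc_le[OF m_pos]
    by (simp only:) (intro abs_affine_le, auto)
qed

lemma abs_thread_le: "\<exists>K. \<forall>j x. 0 \<le> x \<longrightarrow> \<bar>thread j x\<bar> \<le> K * x"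
proof (intro exI allI impI)
  define K where "K = (\<Sum>i<k. \<bar>u ! i\<bar>) + (\<Sum>i=1..l. \<bar>alpha i\<bar>) + ((\<Sum>i<k. \<bar>v ! i\<bar>) + (\<Sum>i=1..m. \<bar>beta i\<bar>))"
  fix j and x :: real assume "0 \<le> x"
  show "\<bar>thread j x\<bar> \<le> K * x"
  proof (cases "x = 0")
    case False
    define s where "s = cell_index x"
    have x: "0 < x" and sx: "\<sigma> s \<le> x" using cell_index_bounds[of x] False \<open>0 \<le> x\<close> unfolding s_def by auto
    have p: "0 \<le> phase j s" "phase j s < int (l + m)" using phase_bounds by auto
    have nonneg: "0 \<le> (\<Sum>i<k. \<bar>w ! i\<bar>) + (\<Sum>i=1..N. \<bar>f i\<bar>)" for w N and f :: "nat \<Rightarrow> real"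
      by (intro add_nonneg_nonneg sum_nonneg) auto
    show ?thesis
    proof (cases "phase j s < int l")
      case True
      have "\<sigma> (s - phase j s) \<le> \<sigma> s" using p by (simp add: sigma_le_iff)
      then have "\<bar>lineA (s - phase j s) x\<bar> \<le> ((\<Sum>i<k. \<bar>u ! i\<bar>) + (\<Sum>i=1..l. \<bar>alpha i\<bar>)) * x"
        using sx by (intro abs_lineA_le) linarith
      moreover have "\<dots> \<le> K * x" using x nonneg unfolding K_def by (intro mult_right_mono) auto
      ultimately have "\<bar>lineA (s - phase j s) x\<bar> \<le> K * x" by linarith
      then show ?thesis using True x unfolding thread_def strand_def s_def by simp
    next
      case False
      have "\<sigma> (s - phase j s + int l) \<le> \<sigma> s" using False by (simp add: sigma_le_iff)
      then have "\<bar>lineB (s - phase j s + int l) x\<bar> \<le> ((\<Sum>i<k. \<bar>v ! i\<bar>) + (\<Sum>i=1..m. \<bar>beta i\<bar>)) * x"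
        using sx by (intro abs_lineB_le) linarith
      moreover have "\<dots> \<le> K * x" using x nonneg unfolding K_def by (intro mult_right_mono) auto
      ultimately have "\<bar>lineB (s - phase j s + int l) x\<bar> \<le> K * x" by linarith
      then show ?thesis using False x unfolding thread_def strand_def s_def by simp
    qed
  qed (simp add: thread_def)
qed

lemma thread_slope_partition:
  assumes "0 < a" "a < b"
  shows "\<exists>Y. partition_points a b Y \<and>
    (\<forall>c d. consecutive Y c d \<longrightarrow> slopes_permute (l + m) (map alpha [1..<l+1] @ map (\<lambda>j. - beta j) [1..<m+1]) thread c d)"
proof (intro exI conjI allI impI)
  define I where "I = {s. a \<le> \<sigma> s \<and> \<sigma> s \<le> b}"
  define Y where "Y = {a, b} \<union> \<sigma> ` I"
  obtain s0 s1 where "\<sigma> s0 < a" "b < \<sigma> s1" using sigma_below sigma_above assms(1) by blast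
  then have "I \<subseteq> {s0..s1}" unfolding I_def by (auto simp flip: sigma_le_iff)
  then show "partition_points a b Y"
    unfolding partition_points_def Y_def using assms finite_subset by (auto simp: I_def)
  fix c d assume cd: "consecutive Y c d"
  then have "a \<le> c" "c < d" "d \<le> b" "{c<..<d} \<inter> Y = {}"
    using assms unfolding consecutive_def Y_def I_def by auto
  define s where "s = cell_index c"
  have sc: "\<sigma> s \<le> c" "c < \<sigma> (s + 1)" using cell_index_bounds \<open>0 < a\<close> \<open>a \<le> c\<close> unfolding s_def by auto
  have "d \<le> \<sigma> (s + 1)"
  proof (rule ccontr)
    assume "\<not> d \<le> \<sigma> (s + 1)"
    then have "\<sigma> (s + 1) \<in> {c<..<d} \<inter> Y"
      using sc \<open>a \<le> c\<close> \<open>d \<le> b\<close> unfolding Y_def I_def by auto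
    then show False using \<open>{c<..<d} \<inter> Y = {}\<close> by blast
  qed
  then have sub: "{c..d} \<subseteq> {\<sigma> s..\<sigma> (s + 1)}" using sc by auto
  have "slopes_permute (l + m) (map alpha [1..<l+1] @ map (\<lambda>j. - beta j) [1..<m+1]) thread
      (\<sigma> s) (\<sigma> (s + 1))"
    unfolding slopes_permute_def using thread_affine mset_strand_slopes
    by (intro exI[of _ "\<lambda>j. strand_slope j s"]) simp
  then show "slopes_permute (l + m) (map alpha [1..<l+1] @ map (\<lambda>j. - beta j) [1..<m+1]) thread c d"
    using sub by (rule slopes_permute_subset)
qed

lemma nu_system_threads:
  "nu_system (l + m) (map alpha [1..<l+1] @ map (\<lambda>j. - beta j) [1..<m+1]) (order_stat (l + m) thread)"
  using abs_thread_le thread_slope_partition by (metis nu_system_order_stat)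

definition segmentA :: "int \<Rightarrow> (real \<times> real) set" where
  "segmentA s = closed_segment (\<sigma> s, height u s) (\<sigma> (s + int l), height v (s + int l))"

definition segmentB :: "int \<Rightarrow> (real \<times> real) set" where
  "segmentB s = closed_segment (\<sigma> s, height v s) (\<sigma> (s + int m), height u (s + int m))"

lemma Gset_eq: "Gset k l m rho u v = {0} \<union> (\<Union>s. segmentA s \<union> segmentB s)"
proof -
  have seg: "segA k l rho u v r t = segmentA (r + t * int k)" "segB k m rho u v r t = segmentB (r + t * int k)"
    for r t unfolding segA_def segB_def segmentA_def segmentB_def pt_eq by (simp_all add: algebra_simps)
  have "(\<Union>t. \<Union>r\<in>{0..<int k}. segmentA (r + t * int k) \<union> segmentB (r + t * int k)) =
      (\<Union>s. segmentA s \<union> segmentB s)"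
  proof (intro equalityI subsetI)
    fix z assume "z \<in> (\<Union>s. segmentA s \<union> segmentB s)"
    then obtain s where z: "z \<in> segmentA s \<union> segmentB s" by blast
    define r t where "r = s mod int k" and "t = s div int k"
    have "s = r + t * int k" unfolding r_def t_def by simp
    then have "z \<in> segmentA (r + t * int k) \<union> segmentB (r + t * int k)" using z by simp
    moreover have "r \<in> {0..<int k}" unfolding r_def using k_pos by simp
    ultimately show "z \<in> (\<Union>t. \<Union>r\<in>{0..<int k}. segmentA (r + t * int k) \<union> segmentB (r + t * int k))"
      by blast
  next
    fix z assume "z \<in> (\<Union>t. \<Union>r\<in>{0..<int k}. segmentA (r + t * int k) \<union> segmentB (r + t * int k))"
    then obtain r t where "z \<in> segmentA (r + t * int k) \<union> segmentB (r + t * int k)" by blast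
    then show "z \<in> (\<Union>s. segmentA s \<union> segmentB s)" by blast
  qed
  then show ?thesis unfolding Gset_def seg by simp
qed

lemma segmentA_eq: "segmentA s = {(x, lineA s x) | x. \<sigma> s \<le> x \<and> x \<le> \<sigma> (s + int l)}"
proof -
  have lt: "\<sigma> s < \<sigma> (s + int l)" using l_pos by (simp add: sigma_less_iff)
  then have "(height v (s + int l) - height u s) / (\<sigma> (s + int l) - \<sigma> s) = cyc l alpha (s + 1)"
    using equations unfolding slope_equations_def riseA_def by simp
  then show ?thesis unfolding segmentA_def closed_segment_eq_graph[OF lt] lineA_def by simp
qed

lemma segmentB_eq: "segmentB s = {(x, lineB s x) | x. \<sigma> s \<le> x \<and> x \<le> \<sigma> (s + int m)}"
proof -
  have lt: "\<sigma> s < \<sigma> (s + int m)" using m_pos by (simp add: sigma_less_iff)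
  then have "(height u (s + int m) - height v s) / (\<sigma> (s + int m) - \<sigma> s) = - cyc m beta (s + 1)"
    using equations unfolding slope_equations_def riseB_def by simp
  then show ?thesis unfolding segmentB_def closed_segment_eq_graph[OF lt] lineB_def by simp
qed

lemma thread_on_segment:
  assumes "0 < x"
  shows "(x, thread j x) \<in> (\<Union>s. segmentA s \<union> segmentB s)"
proof -
  define s where "s = cell_index x"
  have sx: "\<sigma> s \<le> x" "x < \<sigma> (s + 1)" using cell_index_bounds[OF assms] unfolding s_def by auto
  have thread: "thread j x = strand j s x" unfolding thread_def s_def using assms by simp
  have p: "0 \<le> phase j s" "phase j s < int (l + m)" using phase_bounds by auto
  show ?thesis
  proof (cases "phase j s < int l")
    case True
    have "\<sigma> (s - phase j s) \<le> \<sigma> s" "\<sigma> (s + 1) \<le> \<sigma> (s - phase j s + int l)"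
      using p True by (simp_all add: sigma_le_iff)
    then have "(x, thread j x) \<in> segmentA (s - phase j s)"
      unfolding segmentA_eq thread strand_def using True sx by auto
    then show ?thesis by blast
  next
    case False
    have "\<sigma> (s - phase j s + int l) \<le> \<sigma> s" "\<sigma> (s + 1) \<le> \<sigma> (s - phase j s + int l + int m)"
      using p False by (simp_all add: sigma_le_iff)
    then have "(x, thread j x) \<in> segmentB (s - phase j s + int l)"
      unfolding segmentB_eq thread strand_def using False sx by auto
    then show ?thesis by blast
  qed
qed

lemma segmentA_subset: "segmentA s \<subseteq> (\<Union>j\<in>{0..<l + m}. {(x, thread j x) | x. 0 \<le> x})"
proof
  fix z assume "z \<in> segmentA s"
  then obtain x where x: "z = (x, lineA s x)" "\<sigma> s \<le> x" "x \<le> \<sigma> (s + int l)" unfolding segmentA_eq by blast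
  have "s < s + int l" using l_pos by simp
  then obtain t where t: "s \<le> t" "t < s + int l" "\<sigma> t \<le> x" "x \<le> \<sigma> (t + 1)"
    using sigma_cell_between x(2,3) by blast
  define j where "j = nat (s mod int (l + m))"
  have "phase j t = t - s" unfolding j_def using t(1,2) by (intro phase_eq) simp_all
  then have "thread j x = lineA s x"
    using thread_eq_strand[OF t(3,4)] t(2) unfolding strand_def by simp
  then have "z = (x, thread j x)" using x(1) by simp
  moreover have "0 \<le> x" using x(2) sigma_pos[of s] by linarith
  ultimately have "z \<in> {(x, thread j x) | x. 0 \<le> x}" by blast
  moreover have "j \<in> {0..<l + m}" unfolding j_def using nat_mod_less[of "l + m"] l_pos by simp
  ultimately show "z \<in> (\<Union>j\<in>{0..<l + m}. {(x, thread j x) | x. 0 \<le> x})" by blast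
qed

lemma segmentB_subset: "segmentB s \<subseteq> (\<Union>j\<in>{0..<l + m}. {(x, thread j x) | x. 0 \<le> x})"
proof
  fix z assume "z \<in> segmentB s"
  then obtain x where x: "z = (x, lineB s x)" "\<sigma> s \<le> x" "x \<le> \<sigma> (s + int m)" unfolding segmentB_eq by blast
  have "s < s + int m" using m_pos by simp
  then obtain t where t: "s \<le> t" "t < s + int m" "\<sigma> t \<le> x" "x \<le> \<sigma> (t + 1)"
    using sigma_cell_between x(2,3) by blast
  define j where "j = nat ((s - int l) mod int (l + m))"
  have "phase j t = t - (s - int l)" unfolding j_def using t(1,2) by (intro phase_eq) simp_all
  then have "thread j x = lineB s x"
    using thread_eq_strand[OF t(3,4)] t(1) unfolding strand_def by simp
  then have "z = (x, thread j x)" using x(1) by simp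
  moreover have "0 \<le> x" using x(2) sigma_pos[of s] by linarith
  ultimately have "z \<in> {(x, thread j x) | x. 0 \<le> x}" by blast
  moreover have "j \<in> {0..<l + m}" unfolding j_def using nat_mod_less[of "l + m"] l_pos by simp
  ultimately show "z \<in> (\<Union>j\<in>{0..<l + m}. {(x, thread j x) | x. 0 \<le> x})" by blast
qed

lemma threads_graph_eq:
  "(\<Union>j\<in>{0..<l + m}. {(x, thread j x) | x. 0 \<le> x}) = {0} \<union> (\<Union>s. segmentA s \<union> segmentB s)"
proof
  show "(\<Union>j\<in>{0..<l + m}. {(x, thread j x) | x. 0 \<le> x}) \<subseteq> {0} \<union> (\<Union>s. segmentA s \<union> segmentB s)"
  proof
    fix z assume "z \<in> (\<Union>j\<in>{0..<l + m}. {(x, thread j x) | x. 0 \<le> x})"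
    then obtain j x where z: "z = (x, thread j x)" "0 \<le> x" by blast
    show "z \<in> {0} \<union> (\<Union>s. segmentA s \<union> segmentB s)"
    proof (cases "x = 0")
      case True
      then show ?thesis using z by (simp add: thread_def zero_prod_def)
    next
      case False
      then show ?thesis using z thread_on_segment[of x j] by simp
    qed
  qed
  have "0 = (0, thread 0 0)" by (simp add: thread_def zero_prod_def)
  then have "0 \<in> (\<Union>j\<in>{0..<l + m}. {(x, thread j x) | x. 0 \<le> x})" using l_pos by fastforce
  then show "{0} \<union> (\<Union>s. segmentA s \<union> segmentB s) \<subseteq> (\<Union>j\<in>{0..<l + m}. {(x, thread j x) | x. 0 \<le> x})"
    using segmentA_subset segmentB_subset by blast
qed

lemma scaleR_point: "\<tau> *\<^sub>R (\<sigma> s, height w s) = (\<sigma> (s + int k), height w (s + int k))"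
  using sigma_add_period[of s 1] height_add_period[of w s 1] by simp

lemma scaleR_segmentA: "(\<lambda>\<eta>. \<tau> *\<^sub>R \<eta>) ` segmentA s = segmentA (s + int k)"
proof -
  have e: "s + int l + int k = s + int k + int l" by simp
  show ?thesis unfolding segmentA_def closed_segment_scaleR_image scaleR_point e ..
qed

lemma scaleR_segmentB: "(\<lambda>\<eta>. \<tau> *\<^sub>R \<eta>) ` segmentB s = segmentB (s + int k)"
proof -
  have e: "s + int m + int k = s + int k + int m" by simp
  show ?thesis unfolding segmentB_def closed_segment_scaleR_image scaleR_point e ..
qed

lemma scaleR_Gset: "(\<lambda>\<eta>. \<tau> *\<^sub>R \<eta>) ` Gset k l m rho u v = Gset k l m rho u v"
proof -
  have "(\<Union>s. segmentA (s + int k) \<union> segmentB (s + int k)) = (\<Union>s. segmentA s \<union> segmentB s)"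
  proof (intro equalityI subsetI)
    fix z assume "z \<in> (\<Union>s. segmentA s \<union> segmentB s)"
    then obtain s where "z \<in> segmentA ((s - int k) + int k) \<union> segmentB ((s - int k) + int k)" by auto
    then show "z \<in> (\<Union>s. segmentA (s + int k) \<union> segmentB (s + int k))" by blast
  qed blast
  then show ?thesis unfolding Gset_eq image_Un image_UN scaleR_segmentA scaleR_segmentB by simp
qed

lemma regular_nu_graph:
  "is_regular_nu_graph (l + m) (map alpha [1..<l+1] @ map (\<lambda>j. - beta j) [1..<m+1]) (Gset k l m rho u v)"
  unfolding is_regular_nu_graph_def is_nu_graph_def
proof (intro conjI exI[of _ "order_stat (l + m) thread"] exI[of _ \<tau>])
  show "Gset k l m rho u v = nu_graph_of (l + m) (order_stat (l + m) thread)"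
    unfolding nu_graph_of_order_stat threads_graph_eq Gset_eq ..
qed (fact nu_system_threads tau_gt_1 scaleR_Gset)+

end

theorem theorem2p1:
  fixes l m k :: nat and alpha beta rho :: "nat \<Rightarrow> real"
  assumes "l > 0" and "m > 0" and "k = lcm l m"
    and "\<forall>i\<in>{1..l}. alpha i \<ge> 0" and "\<forall>j\<in>{1..m}. beta j \<ge> 0"
    and "(\<exists>i\<in>{1..l}. alpha i \<noteq> 0) \<or> (\<exists>j\<in>{1..m}. beta j \<noteq> 0)"
    and "(\<Sum>i=1..l. alpha i) = (\<Sum>j=1..m. beta j)"
    and "\<forall>i\<in>{1..k}. rho i > 1"
  shows "let nu = map alpha [1..<l+1] @ map (\<lambda>j. - beta j) [1..<m+1];
             slopes_ok = (\<lambda>u v.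
               length u = k \<and> length v = k \<and>
               (\<forall>r\<in>{0..<int k}. \<forall>t::int.
                  slope (pt k rho u r t) (pt k rho v (r + int l) t) = cyc l alpha (r + 1) \<and>
                  slope (pt k rho v r t) (pt k rho u (r + int m) t) = - cyc m beta (r + 1)))
         in (\<exists>!uv. slopes_ok (fst uv) (snd uv)) \<and>
            (\<forall>u v. slopes_ok u v \<longrightarrow> is_regular_nu_graph (l + m) nu (Gset k l m rho u v))"
proof -
  have "0 < k" using assms(1,2,3) by (simp add: lcm_pos_nat)
  then interpret slope_system k rho l m alpha beta
    using assms(1,2,3,8) by unfold_locales auto
  have "is_regular_nu_graph (l + m) (map alpha [1..<l+1] @ map (\<lambda>j. - beta j) [1..<m+1])
      (Gset k l m rho u v)" if "slope_equations u v" for u v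
  proof -
    interpret slope_solution k rho l m alpha beta u v by unfold_locales (rule that)
    show ?thesis by (rule regular_nu_graph)
  qed
  then show ?thesis using slope_equations_unique by (simp only: Let_def slope_conditions_iff) blast
qed

end
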